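(* In the setting described in the context, let $z\in\mathbb Z^{n(n-1)/2}$ and $g\in\{e_r,f_r,q^{\epsilon_r}\}$ (for admissible indices $r$). Then (i) $\mathcal D^{\bar v}([x-y]_q\, g\,T(v+z))=\mathcal D^{\bar v}([x-y]_q\, g\,T(v+\tau(z)))$ for all $z$; (ii) $\mathcal D^{\bar v}(g\,T(v+z))=-\mathcal D^{\bar v}(g\,T(v+\tau(z)))$ for all $z$ with $\tau(z)\neq z$.
   Context: Conventions. Fix $n\ge2$ and $q\in\mathbb C\setminus\{0,\pm1\}$ with a fixed $\ln q$; $q^x:=e^{x\ln q}$, $[x]_q:=\frac{q^x-q^{-x}}{q-q^{-1}}$, $1(q):=\{x\in\mathbb C:q^x=1\}$, and for $A\subseteq\mathbb Z$, $A+\frac{1(q)}2:=\{a+c/2: a\in A, c\in 1(q)\}$. Algebra. $P=\bigoplus_{i=1}^n\mathbb Z\epsilon_i$, $\langle\epsilon_i,\epsilon_j\rangle=\delta_{ij}$, $\alpha_i=\epsilon_i-\epsilon_{i+1}$. $U_q$ is the unital algebra generated by $e_i,f_i$ ($1\le i\le n-1$), $q^h$ ($h\in P$) with relations $q^0=1$, $q^hq^{h'}=q^{h+h'}$, $q^he_iq^{-h}=q^{\langle h,\alpha_i\rangle}e_i$, $q^hf_iq^{-h}=q^{-\langle h,\alpha_i\rangle}f_i$, $e_if_j-f_je_i=\delta_{ij}\frac{q^{\alpha_i}-q^{-\alpha_i}}{q-q^{-1}}$, quantum Serre relations $e_i^2e_j-(q+q^{-1})e_ie_je_i+e_je_i^2=0$,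 $f_i^2f_j-(q+q^{-1})f_if_jf_i+f_jf_i^2=0$ ($|i-j|=1$), and $e_ie_j=e_je_i$, $f_if_j=f_jf_i$ ($|i-j|>1$). Tableaux. For $w=(w_{rs})_{1\le s\le r\le n}$ (entries in $\mathbb C$ or in $\mathbb C(x,y)$), $T(w)$ is a formal symbol (Gelfand–Tsetlin tableau). $\delta^{rs}$ has $1$ at position $(r,s)$ and $0$ elsewhere; $\mathbb Z^{n(n-1)/2}$ denotes integer vectors supported on positions $(r,s)$ with $r\le n-1$. Relations. $\mathfrak V=\{(r,s):1\le s\le r\le n\}$. $\mathcal R$ is the set of formal relations $(r,s)\ge(r-1,t)$, $(r-1,t)>(r,s)$ ($2\le r\le n$, $1\le s\le r$, $1\le t\le r-1$) and $(n,s)\ge(n,t)$ ($s\ne t$). For $\mathcal C\subseteq\mathcal R$, $\mathfrak V(\mathcal C)$ is the set of points of $\mathfrak V$ occurring in relations of $\mathcal C$; $\mathcal C_1,\mathcal C_2$ are disconnected if $\mathfrak V(\mathcal C_1)\cap\mathfrak V(\mathcal C_2)=\emptyset$; $\mathcal C$ is indecomposable if it is not a union of two disconnected nonempty subsets. $p\succeq_{\mathcal C}p'$ means there is a chain $p=p_0,\dots,p_{m}=p'$ with each $p_a\ge p_{a+1}$ or $p_a>p_{a+1}$ in $\mathcal C$; $p\succ_{\mathcal C}p'$ if some link is strict. A cross is $\{(k,i)\ge(k-1,t),(k-1,s)>(k,j)\}$ with $i<j$, $s<t$. An indecomposable $\mathcal C$ is admissible if (i) for $2\le k\le n$, $(k,i)\succ_{\mathcal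 C}(k,j)$ only if $i<j$; (ii) $(n,i)\succeq_{\mathcal C}(n,j)$ only if $i<j$; (iii) $\mathcal C$ has no cross; (iv) for all $(k,i),(k,j)\in\mathfrak V(\mathcal C)$, $1\le k\le n-1$, $i<j$, there are $s,t$ with $\{(k,i)>(k+1,s),(k+1,s)\ge(k,j),(k,i)\ge(k-1,t),(k-1,t)>(k,j)\}\subseteq\mathcal C$, or with $s<t$ and $\{(k,i)>(k+1,s),(k+1,t)\ge(k,j)\}\subseteq\mathcal C$. A general $\mathcal C$ is admissible if every indecomposable component is. Satisfaction. $T(L)$ satisfies $(r,s)\ge(r',s')$ (resp. $>$) if $l_{rs}-l_{r's'}\in\mathbb Z_{\ge0}+\frac{1(q)}2$ (resp. $\mathbb Z_{>0}+\frac{1(q)}2$). $T(L)$ satisfies $\mathcal C$ if it satisfies all relations of $\mathcal C$ and $l_{ki}-l_{kj}\in\mathbb Z+\frac{1(q)}2$ ($i\neq j$) only if $(k,i),(k,j)$ lie in $\mathfrak V(\mathcal C')$ for one indecomposable component $\mathcal C'$. $\mathcal B_{\mathcal C}(T(L))=\{T(L+z):z\in\mathbb Z^{n(n-1)/2},\ T(L+z)\text{ satisfies }\mathcal C\}$. Gelfand–Tsetlin formulas: $q^{\epsilon_k}T(L)=q^{a_k}T(L)$, $a_k=\sum_{i=1}^kl_{ki}-\sum_{i=1}^{k-1}l_{k-1,i}+k$; $e_kT(L)=-\sum_{j=1}^k\frac{\prod_{i=1}^{k+1}[l_{k+1,i}-l_{kj}]_q}{\prod_{i\ne j}[l_{ki}-l_{kj}]_q}T(L+\delta^{kj})$;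 $f_kT(L)=\sum_{j=1}^k\frac{\prod_{i=1}^{k-1}[l_{k-1,i}-l_{kj}]_q}{\prod_{i\ne j}[l_{ki}-l_{kj}]_q}T(L-\delta^{kj})$, where terms whose tableau does not satisfy $\mathcal C$ are omitted. Standing data. $\mathcal C$ is admissible; $T(\bar v)$, $\bar v\in\mathbb C^{n(n+1)/2}$, is $(1,\mathcal C)$-singular: it satisfies $\mathcal C$ and there is exactly one triple $(k,i,j)$ with $1\le i<j\le k\le n-1$, $(k,i),(k,j)\notin\mathfrak V(\mathcal C)$ and $\bar v_{ki}-\bar v_{kj}\in\mathbb Z+\frac{1(q)}2$; moreover $\bar v_{ki}=\bar v_{kj}$. $\tau$ exchanges the $(k,i)$ and $(k,j)$ coordinates. $v$ is the vector with $v_{ki}=x$, $v_{kj}=y$ ($x,y$ indeterminates) and $v_{rs}=\bar v_{rs}$ otherwise; $V(T(v))=V_{\mathcal C}(T(v))$ is the $\mathbb C(x,y)$-space with basis $T(v+z)$, $T(\bar v+z)\in\mathcal B_{\mathcal C}(T(\bar v))$, with $U_q$ acting by the formulas above. $\overline{\mathcal H}$ is the set of $w$ with $w_{tr}\ne w_{ts}$ for all triples $(t,r,s)\ne(k,i,j)$, and $\mathcal F_{ij}$ is the space of rational functions (of $x,y$) smooth on $\overline{\mathcal H}$; $\mathcal F_{ij}\otimes V(T(v))$ is the set of finite sums $\sum f_zT(v+z)$, $f_z\in\mathcal F_{ij}$. For $f\in\mathcal F_{ij}$: $\mathrm{ev}(\bar v)(f)=f(\bar v)$ is the value at $x=\bar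 v_{ki},y=\bar v_{kj}$ and $\mathcal D^{\bar v}(f)=\frac{q-q^{-1}}{4\ln q}(\partial_xf-\partial_yf)(\bar v)$. $V_{\mathcal C}(T(\bar v))$ is the $\mathbb C$-space spanned by symbols $T(\bar v+z),\mathcal DT(\bar v+z)$ ($T(\bar v+z)\in\mathcal B_{\mathcal C}(T(\bar v))$) subject to $T(\bar v+z)=T(\bar v+\tau(z))$, $\mathcal DT(\bar v+z)+\mathcal DT(\bar v+\tau(z))=0$. On $\mathcal F_{ij}\otimes V(T(v))$: $\mathrm{ev}(\bar v)(fT(v+z))=f(\bar v)T(\bar v+z)$ and $\mathcal D^{\bar v}(fT(v+z))=\mathcal D^{\bar v}(f)T(\bar v+z)+f(\bar v)\mathcal DT(\bar v+z)$, extended linearly (both sides of the claim lie in $\mathcal F_{ij}\otimes V(T(v))$ before applying $\mathcal D^{\bar v}$). *)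

theory Defs
  imports "HOL-Analysis.Analysis"
begin

text \<open>q is represented through a fixed logarithm lq, q = exp lq; q^x := exp (x * lq).\<close>

definition qpow :: "complex \<Rightarrow> complex \<Rightarrow> complex" where
  "qpow lq x = exp (x * lq)"

definition qbr :: "complex \<Rightarrow> complex \<Rightarrow> complex" where
  "qbr lq x = (qpow lq x - qpow lq (- x)) / (qpow lq 1 - qpow lq (-1))"

definition one_q :: "complex \<Rightarrow> complex set" where
  "one_q lq = {c. qpow lq c = 1}"

definition halfZ :: "complex \<Rightarrow> int set \<Rightarrow> complex set" where
  "halfZ lq A = {of_int a + c / 2 | a c. a \<in> A \<and> c \<in> one_q lq}"

type_synonym pt = "nat \<times> nat"

datatype rel = Geq pt pt | Gt pt pt

fun rpts :: "rel \<Rightarrow> pt set" where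
  "rpts (Geq a b) = {a, b}"
| "rpts (Gt a b) = {a, b}"

definition Vset :: "rel set \<Rightarrow> pt set" where
  "Vset C = (\<Union>\<rho>\<in>C. rpts \<rho>)"

definition Rset :: "nat \<Rightarrow> rel set" where
  "Rset n =
     {Geq (r, s) (r - 1, t) | r s t. 2 \<le> r \<and> r \<le> n \<and> 1 \<le> s \<and> s \<le> r \<and> 1 \<le> t \<and> t \<le> r - 1}
   \<union> {Gt (r - 1, t) (r, s) | r s t. 2 \<le> r \<and> r \<le> n \<and> 1 \<le> s \<and> s \<le> r \<and> 1 \<le> t \<and> t \<le> r - 1}
   \<union> {Geq (n, s) (n, t) | s t. 1 \<le> s \<and> s \<le> n \<and> 1 \<le> t \<and> t \<le> n \<and> s \<noteq> t}"

definition disconnected :: "rel set \<Rightarrow> rel set \<Rightarrow> bool" where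
  "disconnected A B \<longleftrightarrow> Vset A \<inter> Vset B = {}"

definition indecomposable :: "rel set \<Rightarrow> bool" where
  "indecomposable C \<longleftrightarrow>
     \<not> (\<exists>A B. A \<noteq> {} \<and> B \<noteq> {} \<and> A \<union> B = C \<and> disconnected A B)"

definition components :: "rel set \<Rightarrow> rel set set" where
  "components C = {D. D \<subseteq> C \<and> D \<noteq> {} \<and> indecomposable D \<and>
      (\<forall>D'. D \<subseteq> D' \<and> D' \<subseteq> C \<and> indecomposable D' \<longrightarrow> D' = D)}"

definition links :: "rel set \<Rightarrow> (pt \<times> pt) set" where
  "links C = {(a, b). Geq a b \<in> C \<or> Gt a b \<in> C}"

definition strict_links :: "rel set \<Rightarrow> (pt \<times> pt) set" where
  "strict_links C = {(a, b). Gt a b \<in> C}"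

definition succeq :: "rel set \<Rightarrow> pt \<Rightarrow> pt \<Rightarrow> bool" where
  "succeq C p p' \<longleftrightarrow> (p, p') \<in> (links C)\<^sup>+"

definition succ :: "rel set \<Rightarrow> pt \<Rightarrow> pt \<Rightarrow> bool" where
  "succ C p p' \<longleftrightarrow> (p, p') \<in> (links C)\<^sup>* O strict_links C O (links C)\<^sup>*"

definition has_cross :: "rel set \<Rightarrow> bool" where
  "has_cross C \<longleftrightarrow> (\<exists>k i j s t. i < j \<and> s < t \<and>
      Geq (k, i) (k - 1, t) \<in> C \<and> Gt (k - 1, s) (k, j) \<in> C)"

definition admissible_indec :: "nat \<Rightarrow> rel set \<Rightarrow> bool" where
  "admissible_indec n C \<longleftrightarrow>
     (\<forall>k i j. 2 \<le> k \<and> k \<le> n \<and> succ C (k, i) (k, j) \<longrightarrow> i < j)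
   \<and> (\<forall>i j. succeq C (n, i) (n, j) \<longrightarrow> i < j)
   \<and> \<not> has_cross C
   \<and> (\<forall>k i j. (k, i) \<in> Vset C \<and> (k, j) \<in> Vset C \<and> 1 \<le> k \<and> k \<le> n - 1 \<and> i < j \<longrightarrow>
        (\<exists>s t. {Gt (k, i) (k + 1, s), Geq (k + 1, s) (k, j),
                Geq (k, i) (k - 1, t), Gt (k - 1, t) (k, j)} \<subseteq> C)
      \<or> (\<exists>s t. s < t \<and> {Gt (k, i) (k + 1, s), Geq (k + 1, t) (k, j)} \<subseteq> C))"

definition admissible :: "nat \<Rightarrow> rel set \<Rightarrow> bool" where
  "admissible n C \<longleftrightarrow> (\<forall>D\<in>components C. admissible_indec n D)"

type_synonym tab = "nat \<Rightarrow> nat \<Rightarrow> complex"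
type_synonym zvec = "nat \<Rightarrow> nat \<Rightarrow> int"

fun sat_rel :: "complex \<Rightarrow> tab \<Rightarrow> rel \<Rightarrow> bool" where
  "sat_rel lq L (Geq (r, s) (r', s')) \<longleftrightarrow> L r s - L r' s' \<in> halfZ lq {0..}"
| "sat_rel lq L (Gt (r, s) (r', s')) \<longleftrightarrow> L r s - L r' s' \<in> halfZ lq {0<..}"

text \<open>Satisfaction of C, where the integrality condition on pairs of a row is
  not imposed on the pairs of positions in X (X = {} gives the definition of the paper;
  X = the singular pair is used for the 1-singular tableau).\<close>
definition satC :: "nat \<Rightarrow> complex \<Rightarrow> rel set \<Rightarrow> (pt \<times> pt) set \<Rightarrow> tab \<Rightarrow> bool" where
  "satC n lq C X L \<longleftrightarrow> (\<forall>\<rho>\<in>C. sat_rel lq L \<rho>) \<and>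
     (\<forall>r s t. 1 \<le> s \<and> s \<le> r \<and> r \<le> n \<and> 1 \<le> t \<and> t \<le> r \<and> s \<noteq> t \<and>
        ((r, s), (r, t)) \<notin> X \<and> L r s - L r t \<in> halfZ lq UNIV \<longrightarrow>
        (\<exists>D\<in>components C. (r, s) \<in> Vset D \<and> (r, t) \<in> Vset D))"

definition sing_pair :: "nat \<Rightarrow> nat \<Rightarrow> nat \<Rightarrow> (pt \<times> pt) set" where
  "sing_pair k i j = {((k, i), (k, j)), ((k, j), (k, i))}"

definition one_singular :: "nat \<Rightarrow> complex \<Rightarrow> rel set \<Rightarrow> tab \<Rightarrow> nat \<Rightarrow> nat \<Rightarrow> nat \<Rightarrow> bool" where
  "one_singular n lq C vb k i j \<longleftrightarrow>
     satC n lq C (sing_pair k i j) vb \<and>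
     1 \<le> i \<and> i < j \<and> j \<le> k \<and> k \<le> n - 1 \<and>
     (k, i) \<notin> Vset C \<and> (k, j) \<notin> Vset C \<and> vb k i - vb k j \<in> halfZ lq UNIV \<and>
     (\<forall>k' i' j'. 1 \<le> i' \<and> i' < j' \<and> j' \<le> k' \<and> k' \<le> n - 1 \<and>
        (k', i') \<notin> Vset C \<and> (k', j') \<notin> Vset C \<and> vb k' i' - vb k' j' \<in> halfZ lq UNIV
        \<longrightarrow> (k', i', j') = (k, i, j)) \<and>
     vb k i = vb k j"

text \<open>z in Z^{n(n-1)/2}: integer vectors supported on rows 1..n-1.\<close>
definition zsupp :: "nat \<Rightarrow> zvec \<Rightarrow> bool" where
  "zsupp n z \<longleftrightarrow> (\<forall>r s. z r s \<noteq> 0 \<longrightarrow> 1 \<le> s \<and> s \<le> r \<and> r \<le> n - 1)"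

definition addz :: "tab \<Rightarrow> zvec \<Rightarrow> tab" where
  "addz L z = (\<lambda>r s. L r s + of_int (z r s))"

text \<open>B_C(T(vb)), as a set of shifts z.\<close>
definition Bset :: "nat \<Rightarrow> complex \<Rightarrow> rel set \<Rightarrow> tab \<Rightarrow> nat \<Rightarrow> nat \<Rightarrow> nat \<Rightarrow> zvec set" where
  "Bset n lq C vb k i j = {z. zsupp n z \<and> satC n lq C (sing_pair k i j) (addz vb z)}"

definition tau :: "nat \<Rightarrow> nat \<Rightarrow> nat \<Rightarrow> zvec \<Rightarrow> zvec" where
  "tau k i j z = (\<lambda>r s. if (r, s) = (k, i) then z k j else if (r, s) = (k, j) then z k i else z r s)"

definition delta :: "nat \<Rightarrow> nat \<Rightarrow> zvec" where
  "delta r s = (\<lambda>a b. if (a, b) = (r, s) then 1 else 0)"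

text \<open>The tableau v+z, with v_{ki} = x, v_{kj} = y, as a function of w = (x,y).\<close>
definition vtab :: "tab \<Rightarrow> nat \<Rightarrow> nat \<Rightarrow> nat \<Rightarrow> zvec \<Rightarrow> complex \<times> complex \<Rightarrow> tab" where
  "vtab vb k i j z w = (\<lambda>r s. (if (r, s) = (k, i) then fst w else if (r, s) = (k, j) then snd w
                              else vb r s) + of_int (z r s))"

type_synonym coef = "complex \<times> complex \<Rightarrow> complex"
type_synonym term_list = "(coef \<times> zvec) list"

datatype gen = GE nat | GF nat | GK nat

definition gen_ok :: "nat \<Rightarrow> gen \<Rightarrow> bool" where
  "gen_ok n g = (case g of GE r \<Rightarrow> 1 \<le> r \<and> r \<le> n - 1 | GF r \<Rightarrow> 1 \<le> r \<and> r \<le> n - 1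
                         | GK r \<Rightarrow> 1 \<le> r \<and> r \<le> n)"

text \<open>g T(v+z) by the Gelfand-Tsetlin formulas, as a list of terms f T(v+z');
  terms whose tableau is not in the basis are omitted.\<close>
definition act :: "nat \<Rightarrow> complex \<Rightarrow> rel set \<Rightarrow> tab \<Rightarrow> nat \<Rightarrow> nat \<Rightarrow> nat \<Rightarrow> gen \<Rightarrow> zvec \<Rightarrow> term_list" where
  "act n lq C vb k i j g z =
    filter (\<lambda>(f, z'). z' \<in> Bset n lq C vb k i j)
    (case g of
      GK r \<Rightarrow> [(\<lambda>w. let L = vtab vb k i j z w in
                    qpow lq ((\<Sum>s = 1..r. L r s) - (\<Sum>s = 1..r - 1. L (r - 1) s) + of_nat r), z)]
    | GE r \<Rightarrow> map (\<lambda>t. (\<lambda>w. let L = vtab vb k i j z w in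
                 - (\<Prod>s = 1..r + 1. qbr lq (L (r + 1) s - L r t))
                   / (\<Prod>s\<in>{1..r} - {t}. qbr lq (L r s - L r t)),
               (\<lambda>a b. z a b + delta r t a b))) [1..<r + 1]
    | GF r \<Rightarrow> map (\<lambda>t. (\<lambda>w. let L = vtab vb k i j z w in
                 (\<Prod>s = 1..r - 1. qbr lq (L (r - 1) s - L r t))
                   / (\<Prod>s\<in>{1..r} - {t}. qbr lq (L r s - L r t)),
               (\<lambda>a b. z a b - delta r t a b))) [1..<r + 1])"

definition mult_xy :: "complex \<Rightarrow> term_list \<Rightarrow> term_list" where
  "mult_xy lq ts = map (\<lambda>(f, z'). (\<lambda>w. qbr lq (fst w - snd w) * f w, z')) ts"

definition rep_at :: "complex \<times> complex \<Rightarrow> coef \<Rightarrow> coef \<Rightarrow> (complex \<times> complex) set \<Rightarrow> bool" where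
  "rep_at p f h U \<longleftrightarrow> open U \<and> p \<in> U \<and>
     (\<forall>w\<in>U. \<exists>a b. (h has_derivative (\<lambda>u. a * fst u + b * snd u)) (at w)) \<and>
     (\<forall>w\<in>U. w \<in> closure {w'\<in>U. f w' = h w'})"

definition inF :: "complex \<times> complex \<Rightarrow> coef \<Rightarrow> bool" where
  "inF p f \<longleftrightarrow> (\<exists>h U. rep_at p f h U)"

definition evF :: "complex \<times> complex \<Rightarrow> coef \<Rightarrow> complex" where
  "evF p f = (THE c. \<exists>h U. rep_at p f h U \<and> h p = c)"

definition dxyF :: "complex \<times> complex \<Rightarrow> coef \<Rightarrow> complex" where
  "dxyF p f = (THE d. \<exists>h U a b. rep_at p f h U \<and>
                 (h has_derivative (\<lambda>u. a * fst u + b * snd u)) (at p) \<and> d = a - b)"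

definition DF :: "complex \<Rightarrow> complex \<times> complex \<Rightarrow> coef \<Rightarrow> complex" where
  "DF lq p f = (qpow lq 1 - qpow lq (-1)) / (4 * lq) * dxyF p f"

datatype sym = Tsym zvec | DTsym zvec

text \<open>Elements of the free space on the symbols, as finitely supported coefficient functions.\<close>
definition Dop :: "complex \<Rightarrow> complex \<times> complex \<Rightarrow> term_list \<Rightarrow> sym \<Rightarrow> complex" where
  "Dop lq p ts = (\<lambda>s. sum_list (map (\<lambda>(f, z'). (case s of
        Tsym u \<Rightarrow> if u = z' then DF lq p f else 0
      | DTsym u \<Rightarrow> if u = z' then evF p f else 0)) ts))"

definition rel_gens :: "zvec set \<Rightarrow> (zvec \<Rightarrow> zvec) \<Rightarrow> (sym \<Rightarrow> complex) set" where
  "rel_gens B tv =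
     {(\<lambda>s. (if s = Tsym z then 1 else 0) - (if s = Tsym (tv z) then 1 else 0)) | z. z \<in> B}
   \<union> {(\<lambda>s. (if s = DTsym z then 1 else 0) + (if s = DTsym (tv z) then 1 else 0)) | z. z \<in> B}"

definition cspan :: "(sym \<Rightarrow> complex) set \<Rightarrow> (sym \<Rightarrow> complex) set" where
  "cspan G = {u. \<exists>A c. finite A \<and> A \<subseteq> G \<and> u = (\<lambda>s. \<Sum>g\<in>A. c g * g s)}"

text \<open>Equality in V_C(T(vb)) = free space modulo the defining relations.\<close>
definition vc_eq :: "zvec set \<Rightarrow> (zvec \<Rightarrow> zvec) \<Rightarrow> (sym \<Rightarrow> complex) \<Rightarrow> (sym \<Rightarrow> complex) \<Rightarrow> bool" where
  "vc_eq B tv u u' \<longleftrightarrow> (\<lambda>s. u s - u' s) \<in> cspan (rel_gens B tv)"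

definition all_inF :: "complex \<times> complex \<Rightarrow> term_list \<Rightarrow> bool" where
  "all_inF p ts \<longleftrightarrow> (\<forall>(f, z')\<in>set ts. inF p f)"

end

theory Submission
  imports Defs "HOL-Combinatorics.Permutations"
begin

text \<open>
  The shift \<open>\<tau>\<close> only interchanges the entries \<open>x = v\<^sub>k\<^sub>i\<close> and \<open>y = v\<^sub>k\<^sub>j\<close> of row \<open>k\<close>,
  and every Gelfand-Tsetlin coefficient is invariant under permuting the entries of a row
  (together with the index of the entry being shifted). Hence the terms of \<open>g T(v + \<tau> z)\<close> are
  those of \<open>g T(v + z)\<close> with \<open>x\<close> and \<open>y\<close> interchanged and each shift \<open>z'\<close> replaced by \<open>\<tau> z'\<close>.
  Because \<open>vb k i = vb k j\<close>, interchanging \<open>x\<close> and \<open>y\<close> keeps the value of a coefficient at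
  \<open>vb\<close> and negates \<open>\<partial>\<^sub>x - \<partial>\<^sub>y\<close>, while \<open>[x - y]\<^sub>q\<close> changes sign. So, term by term, the
  difference of the two sides of (i) and the sum of the two sides of (ii) are combinations of
  \<open>T(z') - T(\<tau> z')\<close> and \<open>DT(z') + DT(\<tau> z')\<close>, which vanish in \<open>V\<^sub>C(T(vb))\<close>.
  Values and derivatives at \<open>vb\<close> are those of a holomorphic representative; they are well
  defined because each coefficient is continuous off the zero set of a product of q-numbers of
  affine functions of \<open>(x, y)\<close>, which is nowhere dense.
\<close>

section \<open>Values and derivatives of coefficient functions\<close>

text \<open>Continuity on a dense open set makes the representative in \<^const>\<open>rep_at\<close> unique near
  the point, so that \<^const>\<open>evF\<close> and \<^const>\<open>dxyF\<close> are determined (\<open>rep_at_agree\<close>).\<close>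

definition generically_continuous :: "('a::topological_space \<Rightarrow> 'b::topological_space) \<Rightarrow> bool" where
  "generically_continuous f \<longleftrightarrow> (\<exists>W. open W \<and> closure W = UNIV \<and> continuous_on W f)"

lemma continuous_agree_on_closure:
  fixes f g :: "'a::metric_space \<Rightarrow> 'b::metric_space"
  assumes "w \<in> closure S" "isCont f w" "isCont g w" "\<And>x. x \<in> S \<Longrightarrow> f x = g x"
  shows "f w = g w"
proof -
  obtain x where x: "\<And>n. x n \<in> S" "x \<longlonglongrightarrow> w"
    using assms(1) closure_sequential by blast
  have "(\<lambda>n. f (x n)) \<longlonglongrightarrow> f w" "(\<lambda>n. g (x n)) \<longlonglongrightarrow> g w"
    using assms(2,3) x(2) isCont_tendsto_compose by blast+
  moreover have "(\<lambda>n. f (x n)) = (\<lambda>n. g (x n))"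
    using x(1) assms(4) by simp
  ultimately show ?thesis
    using LIMSEQ_unique by metis
qed

lemma rep_atD:
  assumes "rep_at p f h U"
  shows "open U" "p \<in> U"
    "\<And>w. w \<in> U \<Longrightarrow> \<exists>a b. (h has_derivative (\<lambda>u. a * fst u + b * snd u)) (at w)"
    "\<And>w. w \<in> U \<Longrightarrow> isCont h w" "\<And>w. w \<in> U \<Longrightarrow> w \<in> closure {w'\<in>U. f w' = h w'}"
  using assms has_derivative_continuous unfolding rep_at_def by fast+

lemma rep_at_agree:
  assumes f: "generically_continuous f" and h: "rep_at p f h U" and h': "rep_at p f h' U'"
    and w: "w \<in> U \<inter> U'"
  shows "h w = h' w"
proof -
  obtain W where W: "open W" "closure W = UNIV" "continuous_on W f"
    using f unfolding generically_continuous_def by blast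
  have f_eq_rep: "f x = g x" if g: "rep_at p f g V" and x: "x \<in> V \<inter> W" for g V x
  proof (rule continuous_agree_on_closure[where S = "{x'\<in>V. f x' = g x'}"])
    show "x \<in> closure {x'\<in>V. f x' = g x'}" "isCont g x"
      using rep_atD(4,5)[OF g] x by simp_all
    show "isCont f x"
      using W(1,3) x continuous_on_eq_continuous_at by blast
  qed simp
  have "open (U \<inter> U')"
    using rep_atD(1)[OF h] rep_atD(1)[OF h'] by (rule open_Int)
  then have "closure (U \<inter> U' \<inter> W) = closure (U \<inter> U')"
    by (rule closure_open_Int_superset) (simp add: W(2))
  moreover have "w \<in> closure (U \<inter> U')"
    using closure_subset w by (rule subsetD)
  ultimately have "w \<in> closure (U \<inter> U' \<inter> W)"
    by simp
  moreover have "isCont h w" "isCont h' w"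
    using rep_atD(4)[OF h] rep_atD(4)[OF h'] w by simp_all
  moreover have "h x = h' x" if "x \<in> U \<inter> U' \<inter> W" for x
    using f_eq_rep[OF h, of x] f_eq_rep[OF h', of x] that by simp
  ultimately show ?thesis
    by (rule continuous_agree_on_closure)
qed

lemma evF_eqI:
  assumes "generically_continuous f" "rep_at p f h U"
  shows "evF p f = h p"
  unfolding evF_def
proof (rule the_equality)
  show "\<exists>h' U'. rep_at p f h' U' \<and> h' p = h p"
    using assms(2) by blast
next
  fix c assume "\<exists>h' U'. rep_at p f h' U' \<and> h' p = c"
  then obtain h' U' where h': "rep_at p f h' U'" and c: "h' p = c"
    by blast
  have "p \<in> U \<inter> U'"
    using rep_atD(2)[OF assms(2)] rep_atD(2)[OF h'] by simp
  then show "c = h p"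
    using rep_at_agree[OF assms h'] c by simp
qed

lemma dxyF_eqI:
  assumes f: "generically_continuous f" and h: "rep_at p f h U"
    and d: "(h has_derivative (\<lambda>u. a * fst u + b * snd u)) (at p)"
  shows "dxyF p f = a - b"
  unfolding dxyF_def
proof (rule the_equality)
  show "\<exists>h' U' a' b'. rep_at p f h' U' \<and>
      (h' has_derivative (\<lambda>u. a' * fst u + b' * snd u)) (at p) \<and> a - b = a' - b'"
    using h d by blast
next
  fix c assume "\<exists>h' U' a' b'. rep_at p f h' U' \<and>
      (h' has_derivative (\<lambda>u. a' * fst u + b' * snd u)) (at p) \<and> c = a' - b'"
  then obtain h' U' a' b' where h': "rep_at p f h' U'"
    and d': "(h' has_derivative (\<lambda>u. a' * fst u + b' * snd u)) (at p)" and c: "c = a' - b'"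
    by blast
  have "open (U \<inter> U')" "p \<in> U \<inter> U'"
    using rep_atD(1,2)[OF h] rep_atD(1,2)[OF h'] by auto
  with d have "(h' has_derivative (\<lambda>u. a * fst u + b * snd u)) (at p)"
    by (rule has_derivative_transform_within_open) (use rep_at_agree[OF f h h'] in simp)
  then have "(\<lambda>u. a * fst u + b * snd u) = (\<lambda>u::complex \<times> complex. a' * fst u + b' * snd u)"
    using d' by (rule has_derivative_unique)
  from fun_cong[OF this, of "(1, 0)"] fun_cong[OF this, of "(0, 1)"] have "a = a'" "b = b'"
    by simp_all
  with c show "c = a - b"
    by simp
qed

section \<open>Interchanging x and y\<close>

lemma swap_image_eq_vimage: "prod.swap ` A = prod.swap -` A"
  by (simp add: set_eq_iff)

lemma open_swap_image: "open A \<Longrightarrow> open (prod.swap ` A)"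
  unfolding swap_image_eq_vimage by (intro open_vimage continuous_on_swap)

lemma closure_swap_image:
  fixes A :: "('a::euclidean_space \<times> 'b::euclidean_space) set"
  shows "closure (prod.swap ` A) = prod.swap ` closure A"
proof -
  have "linear (prod.swap :: 'a \<times> 'b \<Rightarrow> 'b \<times> 'a)"
    by (rule linearI) auto
  then show ?thesis
    by (rule closure_injective_linear_image[OF _ inj_swap, symmetric])
qed

lemma has_derivative_swap_args:
  assumes "(h has_derivative (\<lambda>u. a * fst u + b * snd u)) (at (prod.swap w))"
  shows "((\<lambda>w. h (prod.swap w)) has_derivative (\<lambda>u. b * fst u + a * snd u)) (at w)"
proof -
  have "(prod.swap has_derivative prod.swap) (at w)"
    unfolding prod.swap_def by (intro derivative_eq_intros) auto
  from has_derivative_compose[OF this assms] show ?thesis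
    by (simp add: algebra_simps)
qed

lemma rep_at_swap:
  assumes h: "rep_at p f h U" and p: "prod.swap p = p"
  shows "rep_at p (\<lambda>w. f (prod.swap w)) (\<lambda>w. h (prod.swap w)) (prod.swap ` U)"
  unfolding rep_at_def
proof (intro conjI ballI)
  show "open (prod.swap ` U)"
    using rep_atD(1)[OF h] by (rule open_swap_image)
  show "p \<in> prod.swap ` U"
    using rep_atD(2)[OF h] p by (metis image_eqI)
  fix w assume "w \<in> prod.swap ` U"
  then have w: "prod.swap w \<in> U"
    by (simp add: swap_image_eq_vimage)
  then obtain a b where "(h has_derivative (\<lambda>u. a * fst u + b * snd u)) (at (prod.swap w))"
    using rep_atD(3)[OF h] by blast
  then show "\<exists>a b. ((\<lambda>w. h (prod.swap w)) has_derivative (\<lambda>u. a * fst u + b * snd u)) (at w)"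
    using has_derivative_swap_args by blast
  have "prod.swap ` {w'\<in>U. f w' = h w'} = {w'\<in>prod.swap ` U. f (prod.swap w') = h (prod.swap w')}"
    unfolding swap_image_eq_vimage by (simp add: vimage_def)
  moreover have "w \<in> prod.swap ` closure {w'\<in>U. f w' = h w'}"
    using rep_atD(5)[OF h w] image_eqI[of w prod.swap "prod.swap w"] by simp
  ultimately show "w \<in> closure {w'\<in>prod.swap ` U. f (prod.swap w') = h (prod.swap w')}"
    using closure_swap_image[of "{w'\<in>U. f w' = h w'}"] by simp
qed

lemma rep_at_uminus:
  assumes h: "rep_at p f h U"
  shows "rep_at p (\<lambda>w. - f w) (\<lambda>w. - h w) U"
  unfolding rep_at_def
proof (intro conjI ballI)
  show "open U" "p \<in> U"
    using rep_atD(1,2)[OF h] by simp_all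
  fix w assume w: "w \<in> U"
  then obtain a b where "(h has_derivative (\<lambda>u. a * fst u + b * snd u)) (at w)"
    using rep_atD(3)[OF h w] by blast
  from has_derivative_minus[OF this]
  have "((\<lambda>w. - h w) has_derivative (\<lambda>u. (- a) * fst u + (- b) * snd u)) (at w)"
    by (simp add: algebra_simps)
  then show "\<exists>a b. ((\<lambda>w. - h w) has_derivative (\<lambda>u. a * fst u + b * snd u)) (at w)"
    by blast
  show "w \<in> closure {w'\<in>U. - f w' = - h w'}"
    using rep_atD(5)[OF h w] by simp
qed

lemma generically_continuous_swap:
  fixes f :: "'a::euclidean_space \<times> 'b::euclidean_space \<Rightarrow> 'c::topological_space"
  assumes "generically_continuous f"
  shows "generically_continuous (\<lambda>w. f (prod.swap w))"
proof -
  obtain W where W: "open W" "closure W = UNIV" "continuous_on W f"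
    using assms unfolding generically_continuous_def by blast
  have "open (prod.swap ` W)"
    using W(1) by (rule open_swap_image)
  moreover have "closure (prod.swap ` W) = UNIV"
    by (simp add: closure_swap_image W(2))
  moreover have "continuous_on (prod.swap ` W) (\<lambda>w. f (prod.swap w))"
    by (rule continuous_on_compose2[OF W(3) continuous_on_swap]) (simp add: image_image)
  ultimately show ?thesis
    unfolding generically_continuous_def by blast
qed

lemma generically_continuous_uminus:
  fixes f :: "'a::topological_space \<Rightarrow> 'b::topological_group_add"
  shows "generically_continuous f \<Longrightarrow> generically_continuous (\<lambda>w. - f w)"
  unfolding generically_continuous_def using continuous_on_minus by blast

lemma inF_swap: "inF p f \<Longrightarrow> prod.swap p = p \<Longrightarrow> inF p (\<lambda>w. f (prod.swap w))"
  unfolding inF_def using rep_at_swap by blast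

lemma evF_swap:
  assumes "generically_continuous f" "inF p f" "prod.swap p = p"
  shows "evF p (\<lambda>w. f (prod.swap w)) = evF p f"
proof -
  obtain h U where h: "rep_at p f h U"
    using assms(2) unfolding inF_def by blast
  have "evF p (\<lambda>w. f (prod.swap w)) = h (prod.swap p)"
    using evF_eqI[OF generically_continuous_swap[OF assms(1)] rep_at_swap[OF h assms(3)]] .
  also have "\<dots> = evF p f"
    using evF_eqI[OF assms(1) h] assms(3) by simp
  finally show ?thesis .
qed

lemma evF_uminus:
  assumes "generically_continuous f" "inF p f"
  shows "evF p (\<lambda>w. - f w) = - evF p f"
proof -
  obtain h U where h: "rep_at p f h U"
    using assms(2) unfolding inF_def by blast
  show ?thesis
    using evF_eqI[OF generically_continuous_uminus[OF assms(1)] rep_at_uminus[OF h]]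
      evF_eqI[OF assms(1) h] by simp
qed

lemma DF_swap:
  assumes "generically_continuous f" "inF p f" "prod.swap p = p"
  shows "DF lq p (\<lambda>w. f (prod.swap w)) = - DF lq p f"
proof -
  obtain h U where h: "rep_at p f h U"
    using assms(2) unfolding inF_def by blast
  obtain a b where d: "(h has_derivative (\<lambda>u. a * fst u + b * snd u)) (at p)"
    using rep_atD(3)[OF h rep_atD(2)[OF h]] by blast
  then have "((\<lambda>w. h (prod.swap w)) has_derivative (\<lambda>u. b * fst u + a * snd u)) (at p)"
    using has_derivative_swap_args[of h a b p] assms(3) by simp
  from dxyF_eqI[OF generically_continuous_swap[OF assms(1)] rep_at_swap[OF h assms(3)] this]
    dxyF_eqI[OF assms(1) h d]
  have "dxyF p (\<lambda>w. f (prod.swap w)) = - dxyF p f"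
    by simp
  then show ?thesis
    unfolding DF_def by simp
qed

lemma DF_uminus:
  assumes "generically_continuous f" "inF p f"
  shows "DF lq p (\<lambda>w. - f w) = - DF lq p f"
proof -
  obtain h U where h: "rep_at p f h U"
    using assms(2) unfolding inF_def by blast
  obtain a b where d: "(h has_derivative (\<lambda>u. a * fst u + b * snd u)) (at p)"
    using rep_atD(3)[OF h rep_atD(2)[OF h]] by blast
  then have "((\<lambda>w. - h w) has_derivative (\<lambda>u. (- a) * fst u + (- b) * snd u)) (at p)"
    using has_derivative_minus[OF d] by (simp add: algebra_simps)
  from dxyF_eqI[OF generically_continuous_uminus[OF assms(1)] rep_at_uminus[OF h] this]
    dxyF_eqI[OF assms(1) h d]
  have "dxyF p (\<lambda>w. - f w) = - dxyF p f"
    by simp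
  then show ?thesis
    unfolding DF_def by simp
qed

lemma DF_uminus_swap:
  assumes "generically_continuous f" "inF p f" "prod.swap p = p"
  shows "DF lq p (\<lambda>w. - f (prod.swap w)) = DF lq p f"
  using DF_uminus[OF generically_continuous_swap[OF assms(1)] inF_swap[OF assms(2,3)]] DF_swap[OF assms]
  by simp

lemma evF_uminus_swap:
  assumes "generically_continuous f" "inF p f" "prod.swap p = p"
  shows "evF p (\<lambda>w. - f (prod.swap w)) = - evF p f"
  using evF_uminus[OF generically_continuous_swap[OF assms(1)] inF_swap[OF assms(2,3)]] evF_swap[OF assms]
  by simp

section \<open>Row symmetry of the Gelfand-Tsetlin coefficients\<close>

definition gt_K :: "complex \<Rightarrow> nat \<Rightarrow> tab \<Rightarrow> complex" where
  "gt_K lq r L = qpow lq ((\<Sum>s = 1..r. L r s) - (\<Sum>s = 1..r - 1. L (r - 1) s) + of_nat r)"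

definition gt_E :: "complex \<Rightarrow> nat \<Rightarrow> nat \<Rightarrow> tab \<Rightarrow> complex" where
  "gt_E lq r t L = - (\<Prod>s = 1..r + 1. qbr lq (L (r + 1) s - L r t))
     / (\<Prod>s\<in>{1..r} - {t}. qbr lq (L r s - L r t))"

definition gt_F :: "complex \<Rightarrow> nat \<Rightarrow> nat \<Rightarrow> tab \<Rightarrow> complex" where
  "gt_F lq r t L = (\<Prod>s = 1..r - 1. qbr lq (L (r - 1) s - L r t))
     / (\<Prod>s\<in>{1..r} - {t}. qbr lq (L r s - L r t))"

definition gt_terms :: "complex \<Rightarrow> tab \<Rightarrow> nat \<Rightarrow> nat \<Rightarrow> nat \<Rightarrow> gen \<Rightarrow> zvec \<Rightarrow> term_list" where
  "gt_terms lq vb k i j g z =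
    (case g of
      GK r \<Rightarrow> [(\<lambda>w. gt_K lq r (vtab vb k i j z w), z)]
    | GE r \<Rightarrow> map (\<lambda>t. (\<lambda>w. gt_E lq r t (vtab vb k i j z w), \<lambda>a b. z a b + delta r t a b)) [1..<r + 1]
    | GF r \<Rightarrow> map (\<lambda>t. (\<lambda>w. gt_F lq r t (vtab vb k i j z w), \<lambda>a b. z a b - delta r t a b)) [1..<r + 1])"

lemma act_eq_filter_gt_terms:
  "act n lq C vb k i j g z = filter (\<lambda>(f, z'). z' \<in> Bset n lq C vb k i j) (gt_terms lq vb k i j g z)"
  unfolding act_def gt_terms_def gt_K_def gt_E_def gt_F_def Let_def ..

lemma prod_permutes_remove:
  assumes "\<pi> permutes A"
  shows "(\<Prod>s\<in>A - {t}. g (\<pi> s)) = (\<Prod>s\<in>A - {\<pi> t}. g s)"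
proof -
  have "\<pi> ` (A - {t}) = A - {\<pi> t}"
    using image_set_diff[OF permutes_inj[OF assms]] permutes_image[OF assms] by simp
  moreover have "inj_on \<pi> (A - {t})"
    using permutes_inj_on[OF assms] by blast
  ultimately show ?thesis
    using prod.reindex_bij_betw[of \<pi> "A - {t}" "A - {\<pi> t}" g] by (simp add: bij_betw_def)
qed

context
  fixes \<pi> :: "nat \<Rightarrow> nat \<Rightarrow> nat"
  assumes row_perm: "\<And>a. \<pi> a permutes {1..a}"
begin

lemma gt_K_permute_rows: "gt_K lq r (\<lambda>a b. L a (\<pi> a b)) = gt_K lq r L"
  unfolding gt_K_def
  using sum.permute[OF row_perm[of r], of "L r"] sum.permute[OF row_perm[of "r - 1"], of "L (r - 1)"]
  by (simp add: comp_def)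

lemma gt_E_permute_rows: "gt_E lq r t (\<lambda>a b. L a (\<pi> a b)) = gt_E lq r (\<pi> r t) L"
  unfolding gt_E_def
  using prod.permute[OF row_perm[of "r + 1"], of "\<lambda>s. qbr lq (L (r + 1) s - L r (\<pi> r t))"]
    prod_permutes_remove[OF row_perm[of r], of "\<lambda>s. qbr lq (L r s - L r (\<pi> r t))" t]
  by (simp add: comp_def)

lemma gt_F_permute_rows: "gt_F lq r t (\<lambda>a b. L a (\<pi> a b)) = gt_F lq r (\<pi> r t) L"
  unfolding gt_F_def
  using prod.permute[OF row_perm[of "r - 1"], of "\<lambda>s. qbr lq (L (r - 1) s - L r (\<pi> r t))"]
    prod_permutes_remove[OF row_perm[of r], of "\<lambda>s. qbr lq (L r s - L r (\<pi> r t))" t]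
  by (simp add: comp_def)

end

definition row_transpose :: "nat \<Rightarrow> nat \<Rightarrow> nat \<Rightarrow> nat \<Rightarrow> nat \<Rightarrow> nat" where
  "row_transpose k i j a = (if a = k then Transposition.transpose i j else id)"

lemma row_transpose_permutes:
  assumes "1 \<le> i" "i \<le> k" "1 \<le> j" "j \<le> k"
  shows "row_transpose k i j a permutes {1..a}"
  using assms permutes_swap_id[of i "{1..k}" j] by (simp add: row_transpose_def)

lemma vtab_tau:
  assumes "i \<noteq> j"
  shows "vtab vb k i j (tau k i j z) w = (\<lambda>a b. vtab vb k i j z (prod.swap w) a (row_transpose k i j a b))"
  using assms by (auto simp: fun_eq_iff vtab_def tau_def row_transpose_def Transposition.transpose_def)

lemma tau_add_delta:
  assumes "i \<noteq> j"
  shows "tau k i j (\<lambda>a b. z a b + delta r (row_transpose k i j r t) a b) = (\<lambda>a b. tau k i j z a b + delta r t a b)"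
  using assms by (auto simp: fun_eq_iff tau_def delta_def row_transpose_def Transposition.transpose_def)

lemma tau_diff_delta:
  assumes "i \<noteq> j"
  shows "tau k i j (\<lambda>a b. z a b - delta r (row_transpose k i j r t) a b) = (\<lambda>a b. tau k i j z a b - delta r t a b)"
  using assms by (auto simp: fun_eq_iff tau_def delta_def row_transpose_def Transposition.transpose_def)

lemma mset_map_permutes:
  assumes "\<sigma> permutes set xs" "distinct xs" "\<And>t. t \<in> set xs \<Longrightarrow> F t = \<Phi> (G (\<sigma> t))"
  shows "mset (map F xs) = image_mset \<Phi> (mset (map G xs))"
proof -
  have "image_mset (\<Phi> \<circ> G) (mset_set (set xs)) = image_mset F (mset_set (set xs))"
    using permutes_implies_image_mset_eq[OF assms(1), of F "\<Phi> \<circ> G"] assms(3) by simp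
  then show ?thesis
    using mset_set_set[OF assms(2)] by (simp add: image_mset.compositionality)
qed

definition swap_term :: "nat \<Rightarrow> nat \<Rightarrow> nat \<Rightarrow> coef \<times> zvec \<Rightarrow> coef \<times> zvec" where
  "swap_term k i j = (\<lambda>(f, z'). (\<lambda>w. f (prod.swap w), tau k i j z'))"

lemma mset_gt_terms_tau:
  assumes "1 \<le> i" "i < j" "j \<le> k"
  shows "mset (gt_terms lq vb k i j g (tau k i j z)) = image_mset (swap_term k i j) (mset (gt_terms lq vb k i j g z))"
proof -
  let ?\<pi> = "row_transpose k i j"
  have perm: "?\<pi> a permutes {1..a}" for a
    using assms by (intro row_transpose_permutes) simp_all
  have "i \<noteq> j"
    using assms by simp
  note vtab_tau = vtab_tau[OF this]
  have perm_upt: "?\<pi> r permutes set [1..<r + 1]" for r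
  proof -
    have "{1..<r + 1} = {1..r}"
      by auto
    then show ?thesis
      using perm[of r] by (simp only: set_upt)
  qed
  show ?thesis
  proof (cases g)
    case (GK r)
    then show ?thesis
      unfolding gt_terms_def vtab_tau gt_K_permute_rows[OF perm] by (simp add: swap_term_def)
  next
    case (GE r)
    show ?thesis
      unfolding GE gt_terms_def gen.case
      by (rule mset_map_permutes[OF perm_upt])
        (simp_all add: vtab_tau gt_E_permute_rows[OF perm] swap_term_def tau_add_delta[OF \<open>i \<noteq> j\<close>])
  next
    case (GF r)
    show ?thesis
      unfolding GF gt_terms_def gen.case
      by (rule mset_map_permutes[OF perm_upt])
        (simp_all add: vtab_tau gt_F_permute_rows[OF perm] swap_term_def tau_diff_delta[OF \<open>i \<noteq> j\<close>])
  qed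
qed

section \<open>Generic continuity of the Gelfand-Tsetlin coefficients\<close>

definition affine_xy :: "(complex \<times> complex \<Rightarrow> complex) \<Rightarrow> bool" where
  "affine_xy e \<longleftrightarrow> (\<exists>\<alpha> \<beta> c. \<forall>w. e w = \<alpha> * fst w + \<beta> * snd w + c)"

definition sparse_zeros :: "('a::topological_space \<Rightarrow> 'b::zero) \<Rightarrow> bool" where
  "sparse_zeros g \<longleftrightarrow> (\<forall>w. g w = 0) \<or> interior {w. g w = 0} = {}"

lemma affine_xy_vtab: "affine_xy (\<lambda>w. vtab vb k i j z w a b)"
  unfolding affine_xy_def vtab_def
  by (rule exI[of _ "if (a, b) = (k, i) then 1 else 0"],
      rule exI[of _ "if (a, b) = (k, i) then 0 else if (a, b) = (k, j) then 1 else 0"],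
      rule exI[of _ "(if (a, b) = (k, i) \<or> (a, b) = (k, j) then 0 else vb a b) + of_int (z a b)"]) auto

lemma affine_xy_diff: "affine_xy e \<Longrightarrow> affine_xy e' \<Longrightarrow> affine_xy (\<lambda>w. e w - e' w)"
  unfolding affine_xy_def
proof (elim exE)
  fix \<alpha> \<beta> c \<alpha>' \<beta>' c'
  assume "\<forall>w. e w = \<alpha> * fst w + \<beta> * snd w + c" "\<forall>w. e' w = \<alpha>' * fst w + \<beta>' * snd w + c'"
  then have "\<forall>w. e w - e' w = (\<alpha> - \<alpha>') * fst w + (\<beta> - \<beta>') * snd w + (c - c')"
    by (simp add: algebra_simps)
  then show "\<exists>\<alpha> \<beta> c. \<forall>w. e w - e' w = \<alpha> * fst w + \<beta> * snd w + c"
    by blast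
qed

lemma continuous_on_affine_xy:
  assumes "affine_xy e"
  shows "continuous_on A e"
proof -
  obtain \<alpha> \<beta> c where "\<And>w. e w = \<alpha> * fst w + \<beta> * snd w + c"
    using assms unfolding affine_xy_def by blast
  then have "e = (\<lambda>w. \<alpha> * fst w + \<beta> * snd w + c)"
    by (rule ext)
  then show ?thesis
    by (simp only:) (intro continuous_intros)
qed

lemma continuous_on_vtab [continuous_intros]: "continuous_on A (\<lambda>w. vtab vb k i j z w a b)"
  by (rule continuous_on_affine_xy[OF affine_xy_vtab])

lemma continuous_on_qbr [continuous_intros]:
  "continuous_on A e \<Longrightarrow> continuous_on A (\<lambda>w. qbr lq (e w))"
  unfolding qbr_def qpow_def divide_inverse by (intro continuous_intros)

lemma qpow_1_neq_qpow_neg_1: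
  assumes "exp lq \<noteq> 1" "exp lq \<noteq> -1"
  shows "qpow lq 1 \<noteq> qpow lq (-1)"
proof
  assume "qpow lq 1 = qpow lq (-1)"
  then have "exp lq * exp lq = exp lq * exp (- lq)"
    by (simp add: qpow_def)
  also have "\<dots> = 1"
    by (simp add: exp_minus_inverse)
  finally have "(exp lq - 1) * (exp lq + 1) = 0"
    by (simp add: algebra_simps)
  with assms show False
    using eq_neg_iff_add_eq_0[of "exp lq" 1] by auto
qed

lemma qbr_zero_imp:
  assumes "exp lq \<noteq> 1" "exp lq \<noteq> -1" "qbr lq u = 0"
  shows "u \<in> range (\<lambda>n::int. \<i> * of_int n * pi / lq)"
proof -
  have "exp (u * lq) = exp (- u * lq)"
    using assms qpow_1_neq_qpow_neg_1[OF assms(1,2)] by (simp add: qbr_def qpow_def)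
  moreover have "exp (2 * u * lq) = exp (u * lq) * exp (u * lq)"
    by (simp add: exp_add[symmetric] algebra_simps)
  ultimately have "exp (2 * u * lq) = exp (u * lq) * exp (- u * lq)"
    by simp
  also have "\<dots> = 1"
    by (simp add: exp_add[symmetric])
  finally obtain n :: int where "Re (2 * u * lq) = 0" "Im (2 * u * lq) = of_int (2 * n) * pi"
    using exp_eq_1 by blast
  then have "2 * u * lq = \<i> * (of_int (2 * n) * pi)"
    by (simp add: complex_eq_iff)
  moreover have "lq \<noteq> 0"
    using assms(1) by auto
  ultimately have "u = \<i> * of_int n * pi / lq"
    by (simp add: field_simps)
  then show ?thesis
    by blast
qed

lemma countable_qbr_zeros:
  assumes "exp lq \<noteq> 1" "exp lq \<noteq> -1"
  shows "countable {u. qbr lq u = 0}"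
proof (rule countable_subset)
  show "countable (range (\<lambda>n::int. \<i> * of_int n * pi / lq))"
    by simp
qed (use qbr_zero_imp[OF assms] in blast)

lemma interior_affine_xy_vimage_countable:
  fixes e :: "complex \<times> complex \<Rightarrow> complex"
  assumes e: "\<And>w. e w = \<alpha> * fst w + \<beta> * snd w + c" and nonconst: "\<alpha> \<noteq> 0 \<or> \<beta> \<noteq> 0"
    and S: "countable S"
  shows "interior (e -` S) = {}"
proof (rule ccontr)
  assume "interior (e -` S) \<noteq> {}"
  then obtain w0 where "w0 \<in> interior (e -` S)"
    by blast
  then obtain \<epsilon> where \<epsilon>: "\<epsilon> > 0" "ball w0 \<epsilon> \<subseteq> e -` S"
    using interior_subset open_contains_ball[of "interior (e -` S)"] by blast
  define v where "v = (\<lambda>t::complex. if \<alpha> \<noteq> 0 then (t, 0::complex) else (0, t))"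
  define m where "m = (if \<alpha> \<noteq> 0 then \<alpha> else \<beta>)"
  have "m \<noteq> 0"
    using nonconst by (simp add: m_def)
  have ev: "e (w0 + v t) = e w0 + m * t" for t
    unfolding e v_def m_def by (auto simp: algebra_simps)
  have "ball (e w0) (norm m * \<epsilon>) \<subseteq> S"
  proof
    fix u assume "u \<in> ball (e w0) (norm m * \<epsilon>)"
    then have "norm ((u - e w0) / m) < \<epsilon>"
      using \<open>m \<noteq> 0\<close> by (simp add: dist_norm norm_minus_commute norm_divide field_simps)
    then have "w0 + v ((u - e w0) / m) \<in> ball w0 \<epsilon>"
      by (simp add: dist_norm v_def norm_Pair)
    then show "u \<in> S"
      using \<epsilon>(2) ev[of "(u - e w0) / m"] \<open>m \<noteq> 0\<close> by auto
  qed
  moreover have "uncountable (ball (e w0) (norm m * \<epsilon>))"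
    using \<open>m \<noteq> 0\<close> \<epsilon>(1) by (intro uncountable_ball) simp
  ultimately show False
    using S countable_subset by blast
qed

lemma sparse_zeros_qbr_affine_xy:
  assumes "exp lq \<noteq> 1" "exp lq \<noteq> -1" "affine_xy e"
  shows "sparse_zeros (\<lambda>w. qbr lq (e w))"
proof -
  obtain \<alpha> \<beta> c where e: "\<And>w. e w = \<alpha> * fst w + \<beta> * snd w + c"
    using assms(3) unfolding affine_xy_def by blast
  show ?thesis
  proof (cases "\<alpha> = 0 \<and> \<beta> = 0")
    case True
    then show ?thesis
      unfolding sparse_zeros_def e by (cases "qbr lq c = 0") simp_all
  next
    case False
    have "{w. qbr lq (e w) = 0} = e -` {u. qbr lq u = 0}"
      by auto
    then show ?thesis
      using interior_affine_xy_vimage_countable[OF e _ countable_qbr_zeros[OF assms(1,2)]] False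
      unfolding sparse_zeros_def by simp
  qed
qed

lemma sparse_zeros_prod:
  fixes g :: "'i \<Rightarrow> 'a::topological_space \<Rightarrow> 'b::{comm_semiring_1, semiring_no_zero_divisors, t2_space}"
  assumes "finite S" "\<And>s. s \<in> S \<Longrightarrow> continuous_on UNIV (g s)" "\<And>s. s \<in> S \<Longrightarrow> sparse_zeros (g s)"
  shows "sparse_zeros (\<lambda>w. \<Prod>s\<in>S. g s w)"
  using assms
proof (induction S rule: finite_induct)
  case empty
  then show ?case
    by (simp add: sparse_zeros_def)
next
  case (insert a S)
  have IH: "sparse_zeros (\<lambda>w. \<Prod>s\<in>S. g s w)"
    using insert.IH insert.prems by blast
  show ?case
  proof (cases "(\<forall>w. g a w = 0) \<or> (\<forall>w. (\<Prod>s\<in>S. g s w) = 0)")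
    case True
    then show ?thesis
      using insert.hyps by (auto simp: sparse_zeros_def)
  next
    case False
    then have "interior {w. g a w = 0} = {}" "interior {w. (\<Prod>s\<in>S. g s w) = 0} = {}"
      using insert.prems(2) IH unfolding sparse_zeros_def by auto
    moreover have "closed {w. g a w = 0}"
      using insert.prems(1) by (intro closed_Collect_eq) simp_all
    moreover have "{w. (\<Prod>s\<in>insert a S. g s w) = 0} = {w. g a w = 0} \<union> {w. (\<Prod>s\<in>S. g s w) = 0}"
      using insert.hyps by auto
    ultimately show ?thesis
      unfolding sparse_zeros_def by (simp add: interior_closed_Un_empty_interior)
  qed
qed

lemma generically_continuous_continuous_on: "continuous_on UNIV f \<Longrightarrow> generically_continuous f"
  unfolding generically_continuous_def by (intro exI[of _ UNIV]) simp

lemma generically_continuous_divide: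
  fixes N D :: "'a::topological_space \<Rightarrow> 'b::{real_normed_field, field}"
  assumes "continuous_on UNIV N" "continuous_on UNIV D" "sparse_zeros D"
  shows "generically_continuous (\<lambda>w. N w / D w)"
proof (cases "\<forall>w. D w = 0")
  case True
  then show ?thesis
    by (intro generically_continuous_continuous_on) simp
next
  case False
  then have "interior {w. D w = 0} = {}"
    using assms(3) unfolding sparse_zeros_def by blast
  moreover have "closed {w. D w = 0}"
    using assms(2) by (intro closed_Collect_eq) simp_all
  moreover have "continuous_on (- {w. D w = 0}) (\<lambda>w. N w / D w)"
    using continuous_on_subset[OF assms(1) subset_UNIV] continuous_on_subset[OF assms(2) subset_UNIV]
    by (intro continuous_on_divide) auto
  ultimately show ?thesis
    unfolding generically_continuous_def
    by (intro exI[of _ "- {w. D w = 0}"]) (simp add: open_Compl closure_complement)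
qed

lemma generically_continuous_mult:
  fixes f c :: "'a::topological_space \<Rightarrow> 'b::real_normed_algebra"
  assumes "generically_continuous f" "continuous_on UNIV c"
  shows "generically_continuous (\<lambda>w. c w * f w)"
proof -
  obtain W where W: "open W" "closure W = UNIV" "continuous_on W f"
    using assms(1) unfolding generically_continuous_def by blast
  have "continuous_on W (\<lambda>w. c w * f w)"
    using continuous_on_subset[OF assms(2) subset_UNIV] W(3) by (rule continuous_on_mult)
  with W(1,2) show ?thesis
    unfolding generically_continuous_def by blast
qed

lemma generically_continuous_gt_terms:
  assumes "exp lq \<noteq> 1" "exp lq \<noteq> -1" "x \<in> set (gt_terms lq vb k i j g z)"
  shows "generically_continuous (fst x)"
proof -
  let ?L = "vtab vb k i j z"
  have denom: "continuous_on UNIV (\<lambda>w. \<Prod>s\<in>S. qbr lq (?L w r s - ?L w r t))"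
    "sparse_zeros (\<lambda>w. \<Prod>s\<in>S. qbr lq (?L w r s - ?L w r t))" if "finite S" for S r t
    by (intro continuous_intros sparse_zeros_prod sparse_zeros_qbr_affine_xy affine_xy_diff affine_xy_vtab
        that assms(1,2))+
  show ?thesis
  proof (cases g)
    case (GK r)
    then have "fst x = (\<lambda>w. gt_K lq r (?L w))"
      using assms(3) unfolding gt_terms_def by auto
    then show ?thesis
      unfolding gt_K_def qpow_def
      by (simp only:) (intro generically_continuous_continuous_on continuous_intros)
  next
    case (GE r)
    then obtain t where "fst x = (\<lambda>w. gt_E lq r t (?L w))"
      using assms(3) unfolding gt_terms_def by auto
    then show ?thesis
      unfolding gt_E_def
      by (simp only:) (intro generically_continuous_divide denom continuous_intros finite_Diff finite_atLeastAtMost)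
  next
    case (GF r)
    then obtain t where "fst x = (\<lambda>w. gt_F lq r t (?L w))"
      using assms(3) unfolding gt_terms_def by auto
    then show ?thesis
      unfolding gt_F_def
      by (simp only:) (intro generically_continuous_divide denom continuous_intros finite_Diff finite_atLeastAtMost)
  qed
qed

section \<open>Stability of the basis under \<open>\<tau>\<close>\<close>

lemma sat_rel_cong:
  assumes "\<And>a b. (a, b) \<in> rpts \<rho> \<Longrightarrow> L' a b = L a b"
  shows "sat_rel lq L' \<rho> = sat_rel lq L \<rho>"
proof (cases \<rho>)
  case (Geq p p')
  then show ?thesis
    using assms by (cases p; cases p') auto
next
  case (Gt p p')
  then show ?thesis
    using assms by (cases p; cases p') auto
qed

lemma satC_permute_rows:
  assumes perm: "\<And>a. \<pi> a permutes {1..a}"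
    and fixes_C: "\<And>a b. (a, b) \<in> Vset C \<Longrightarrow> \<pi> a b = b"
    and X: "\<And>r s t. ((r, \<pi> r s), (r, \<pi> r t)) \<in> X \<longleftrightarrow> ((r, s), (r, t)) \<in> X"
    and sat: "satC n lq C X L"
  shows "satC n lq C X (\<lambda>a b. L a (\<pi> a b))"
  unfolding satC_def
proof (intro conjI ballI allI impI)
  fix \<rho> assume "\<rho> \<in> C"
  then have "rpts \<rho> \<subseteq> Vset C"
    unfolding Vset_def by blast
  then have "sat_rel lq (\<lambda>a b. L a (\<pi> a b)) \<rho> = sat_rel lq L \<rho>"
    using fixes_C by (intro sat_rel_cong) (simp add: subset_eq)
  also have "sat_rel lq L \<rho>"
    using conjunct1[OF sat[unfolded satC_def]] \<open>\<rho> \<in> C\<close> by simp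
  finally show "sat_rel lq (\<lambda>a b. L a (\<pi> a b)) \<rho>" .
next
  fix r s t
  assume h: "1 \<le> s \<and> s \<le> r \<and> r \<le> n \<and> 1 \<le> t \<and> t \<le> r \<and> s \<noteq> t \<and>
    ((r, s), (r, t)) \<notin> X \<and> L r (\<pi> r s) - L r (\<pi> r t) \<in> halfZ lq UNIV"
  have in_row: "\<pi> r s \<in> {1..r}" "\<pi> r t \<in> {1..r}"
    using h permutes_in_image[OF perm[of r]] by simp_all
  have inj: "inj (\<pi> r)"
    using perm[of r] by (rule permutes_inj)
  have "\<exists>D\<in>components C. (r, \<pi> r s) \<in> Vset D \<and> (r, \<pi> r t) \<in> Vset D"
    using conjunct2[OF sat[unfolded satC_def], rule_format, of "\<pi> r s" r "\<pi> r t"]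
      h in_row X[of r s t] inj_eq[OF inj] by simp
  then obtain D where D: "D \<in> components C" "(r, \<pi> r s) \<in> Vset D" "(r, \<pi> r t) \<in> Vset D"
    by blast
  have "Vset D \<subseteq> Vset C"
    using D(1) unfolding components_def Vset_def by blast
  then have "\<pi> r (\<pi> r s) = \<pi> r s" "\<pi> r (\<pi> r t) = \<pi> r t"
    using D(2,3) fixes_C by (meson subsetD)+
  then have "\<pi> r s = s" "\<pi> r t = t"
    using inj_eq[OF inj] by simp_all
  with D show "\<exists>D\<in>components C. (r, s) \<in> Vset D \<and> (r, t) \<in> Vset D"
    by metis
qed

lemma addz_tau:
  assumes "vb k i = vb k j" "i \<noteq> j"
  shows "addz vb (tau k i j z) = (\<lambda>a b. addz vb z a (row_transpose k i j a b))"
  using assms by (auto simp: fun_eq_iff addz_def tau_def row_transpose_def Transposition.transpose_def)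

lemma tau_in_Bset:
  assumes os: "one_singular n lq C vb k i j" and z: "z \<in> Bset n lq C vb k i j"
  shows "tau k i j z \<in> Bset n lq C vb k i j"
proof -
  have ij: "1 \<le> i" "i < j" "j \<le> k" "k \<le> n - 1" and notin: "(k, i) \<notin> Vset C" "(k, j) \<notin> Vset C"
    and "vb k i = vb k j"
    using os unfolding one_singular_def by auto
  have "zsupp n (tau k i j z)"
    using z ij unfolding Bset_def zsupp_def tau_def by auto
  moreover have "satC n lq C (sing_pair k i j) (\<lambda>a b. addz vb z a (row_transpose k i j a b))"
  proof (rule satC_permute_rows)
    show "row_transpose k i j a permutes {1..a}" for a
      using ij by (intro row_transpose_permutes) simp_all
    show "row_transpose k i j a b = b" if "(a, b) \<in> Vset C" for a b
      using that notin by (auto simp: row_transpose_def Transposition.transpose_def)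
    show "((r, row_transpose k i j r s), (r, row_transpose k i j r t)) \<in> sing_pair k i j
        \<longleftrightarrow> ((r, s), (r, t)) \<in> sing_pair k i j" for r s t
      using ij by (auto simp: sing_pair_def row_transpose_def Transposition.transpose_def)
    show "satC n lq C (sing_pair k i j) (addz vb z)"
      using z unfolding Bset_def by simp
  qed
  ultimately show ?thesis
    unfolding Bset_def using addz_tau[of vb k i j z] \<open>vb k i = vb k j\<close> ij by simp
qed

section \<open>The defining relations of \<open>V\<^sub>C(T(vb))\<close>\<close>

lemma cspan_zero: "(\<lambda>s. 0) \<in> cspan G"
  unfolding cspan_def by (intro CollectI exI[of _ "{}"]) simp

lemma cspan_add:
  assumes "u \<in> cspan G" "u' \<in> cspan G"
  shows "(\<lambda>s. u s + u' s) \<in> cspan G"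
proof -
  obtain A c where A: "finite A" "A \<subseteq> G" "u = (\<lambda>s. \<Sum>g\<in>A. c g * g s)"
    using assms(1) unfolding cspan_def by blast
  obtain A' c' where A': "finite A'" "A' \<subseteq> G" "u' = (\<lambda>s. \<Sum>g\<in>A'. c' g * g s)"
    using assms(2) unfolding cspan_def by blast
  define d where "d g = (if g \<in> A then c g else 0) + (if g \<in> A' then c' g else 0)" for g
  have "(\<Sum>g\<in>A \<union> A'. d g * g s) = (\<Sum>g\<in>A. c g * g s) + (\<Sum>g\<in>A'. c' g * g s)" for s
  proof -
    have "(\<Sum>g\<in>A \<union> A'. d g * g s)
        = (\<Sum>g\<in>A \<union> A'. if g \<in> A then c g * g s else 0) + (\<Sum>g\<in>A \<union> A'. if g \<in> A' then c' g * g s else 0)"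
    proof -
      have "d g * g s = (if g \<in> A then c g * g s else 0) + (if g \<in> A' then c' g * g s else 0)" for g
        unfolding d_def by (simp add: distrib_right)
      then show ?thesis
        by (simp add: sum.distrib)
    qed
    also have "\<dots> = (\<Sum>g\<in>A. c g * g s) + (\<Sum>g\<in>A'. c' g * g s)"
      using sum.inter_restrict[of "A \<union> A'" "\<lambda>g. c g * g s" A]
        sum.inter_restrict[of "A \<union> A'" "\<lambda>g. c' g * g s" A'] A(1) A'(1)
      by (simp add: Int_absorb1)
    finally show ?thesis .
  qed
  with A A' show ?thesis
    unfolding cspan_def by (intro CollectI exI[of _ "A \<union> A'"] exI[of _ d]) auto
qed

lemma cspan_scale_gen: "g \<in> G \<Longrightarrow> (\<lambda>s. a * g s) \<in> cspan G"
  unfolding cspan_def by (intro CollectI exI[of _ "{g}"] exI[of _ "\<lambda>_. a"]) simp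

definition rel_T :: "(zvec \<Rightarrow> zvec) \<Rightarrow> zvec \<Rightarrow> sym \<Rightarrow> complex" where
  "rel_T tv z = (\<lambda>s. (if s = Tsym z then 1 else 0) - (if s = Tsym (tv z) then 1 else 0))"

definition rel_DT :: "(zvec \<Rightarrow> zvec) \<Rightarrow> zvec \<Rightarrow> sym \<Rightarrow> complex" where
  "rel_DT tv z = (\<lambda>s. (if s = DTsym z then 1 else 0) + (if s = DTsym (tv z) then 1 else 0))"

lemma cspan_rel_gens_step:
  assumes "z \<in> B" "u \<in> cspan (rel_gens B tv)"
  shows "(\<lambda>s. a * rel_T tv z s + b * rel_DT tv z s + u s) \<in> cspan (rel_gens B tv)"
proof -
  have "rel_T tv z \<in> rel_gens B tv" "rel_DT tv z \<in> rel_gens B tv"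
    using assms(1) unfolding rel_gens_def rel_T_def rel_DT_def by blast+
  then show ?thesis
    using assms(2) by (intro cspan_add cspan_scale_gen)
qed

lemma Dop_Nil: "Dop lq p [] = (\<lambda>s. 0)"
  unfolding Dop_def by simp

lemma Dop_Cons:
  "Dop lq p ((f, z') # A) s = (case s of Tsym u \<Rightarrow> if u = z' then DF lq p f else 0
      | DTsym u \<Rightarrow> if u = z' then evF p f else 0) + Dop lq p A s"
  unfolding Dop_def by simp

lemma Dop_mset: "mset A = mset A' \<Longrightarrow> Dop lq p A = Dop lq p A'"
  unfolding Dop_def by (simp add: sum_mset_sum_list[symmetric])

lemma Dop_map_in_cspan:
  assumes "c * c = 1"
    and "\<And>f z'. (f, z') \<in> set A \<Longrightarrow> z' \<in> B \<and> snd (\<phi> (f, z')) = tau k i j z' \<and>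
      DF lq p (fst (\<phi> (f, z'))) = c * DF lq p f \<and> evF p (fst (\<phi> (f, z'))) = - c * evF p f"
  shows "(\<lambda>s. Dop lq p A s - c * Dop lq p (map \<phi> A) s) \<in> cspan (rel_gens B (tau k i j))"
  using assms(2)
proof (induction A)
  case Nil
  then show ?case
    by (simp add: Dop_Nil cspan_zero)
next
  case (Cons x A)
  obtain f z' where x: "x = (f, z')"
    by (cases x)
  obtain f' where \<phi>: "\<phi> (f, z') = (f', tau k i j z')"
    and "z' \<in> B" "DF lq p f' = c * DF lq p f" "evF p f' = - c * evF p f"
    using Cons.prems[of f z'] x by (cases "\<phi> (f, z')") auto
  have "(\<lambda>s. DF lq p f * rel_T (tau k i j) z' s + evF p f * rel_DT (tau k i j) z' s
      + (Dop lq p A s - c * Dop lq p (map \<phi> A) s)) \<in> cspan (rel_gens B (tau k i j))"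
    using \<open>z' \<in> B\<close> Cons by (intro cspan_rel_gens_step) auto
  moreover have "Dop lq p (x # A) s - c * Dop lq p (map \<phi> (x # A)) s
      = DF lq p f * rel_T (tau k i j) z' s + evF p f * rel_DT (tau k i j) z' s
      + (Dop lq p A s - c * Dop lq p (map \<phi> A) s)" for s
    using assms(1) \<open>DF lq p f' = c * DF lq p f\<close> \<open>evF p f' = - c * evF p f\<close>
    unfolding x by (cases s) (auto simp: Dop_Cons \<phi> rel_T_def rel_DT_def algebra_simps)
  ultimately show ?case
    by simp
qed

section \<open>The action on \<open>T(v + \<tau> z)\<close>\<close>

lemma tau_tau: "tau k i j (tau k i j z) = z"
  by (auto simp: fun_eq_iff tau_def)

lemma mset_act_tau:
  assumes os: "one_singular n lq C vb k i j"
  shows "mset (act n lq C vb k i j g (tau k i j z))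
    = image_mset (swap_term k i j) (mset (act n lq C vb k i j g z))"
proof -
  let ?P = "\<lambda>(f, z'). z' \<in> Bset n lq C vb k i j"
  have "1 \<le> i" "i < j" "j \<le> k"
    using os unfolding one_singular_def by auto
  note gt_terms_tau = mset_gt_terms_tau[OF this]
  have "tau k i j z' \<in> Bset n lq C vb k i j \<longleftrightarrow> z' \<in> Bset n lq C vb k i j" for z'
    using tau_in_Bset[OF os, of z'] tau_in_Bset[OF os, of "tau k i j z'"] by (auto simp: tau_tau)
  then have P_swap: "(\<lambda>x. ?P (swap_term k i j x)) = ?P"
    by (simp add: fun_eq_iff swap_term_def)
  show ?thesis
    unfolding act_eq_filter_gt_terms mset_filter gt_terms_tau filter_mset_image_mset P_swap ..
qed

lemma act_term_props:
  assumes "exp lq \<noteq> 1" "exp lq \<noteq> -1" "(f, z') \<in> set (act n lq C vb k i j g z)"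
  shows "generically_continuous f" "z' \<in> Bset n lq C vb k i j"
  using assms generically_continuous_gt_terms[OF assms(1,2), of "(f, z')"]
  unfolding act_eq_filter_gt_terms by auto

definition neg_swap_term :: "nat \<Rightarrow> nat \<Rightarrow> nat \<Rightarrow> coef \<times> zvec \<Rightarrow> coef \<times> zvec" where
  "neg_swap_term k i j = (\<lambda>(f, z'). (\<lambda>w. - f (prod.swap w), tau k i j z'))"

definition mult_term :: "complex \<Rightarrow> coef \<times> zvec \<Rightarrow> coef \<times> zvec" where
  "mult_term lq = (\<lambda>(f, z'). (\<lambda>w. qbr lq (fst w - snd w) * f w, z'))"

lemma mult_xy_eq_map: "mult_xy lq ts = map (mult_term lq) ts"
  unfolding mult_xy_def mult_term_def ..

lemma qbr_minus: "qbr lq (- x) = - qbr lq x"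
  unfolding qbr_def by (simp add: minus_divide_left)

lemma mult_term_swap_term: "mult_term lq (swap_term k i j x) = neg_swap_term k i j (mult_term lq x)"
proof -
  have "qbr lq (snd w - fst w) = - qbr lq (fst w - snd w)" for w
    using qbr_minus[of lq "fst w - snd w"] by simp
  then show ?thesis
    by (cases x) (simp add: mult_term_def swap_term_def neg_swap_term_def)
qed

lemma vc_eq_mult_xy_act_tau:
  assumes q: "exp lq \<noteq> 1" "exp lq \<noteq> -1" and os: "one_singular n lq C vb k i j"
    and inF: "all_inF (vb k i, vb k j) (mult_xy lq (act n lq C vb k i j g z))"
  shows "vc_eq (Bset n lq C vb k i j) (tau k i j)
    (Dop lq (vb k i, vb k j) (mult_xy lq (act n lq C vb k i j g z)))
    (Dop lq (vb k i, vb k j) (mult_xy lq (act n lq C vb k i j g (tau k i j z))))"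
proof -
  let ?p = "(vb k i, vb k j)"
  have p: "prod.swap ?p = ?p"
    using os unfolding one_singular_def by simp
  have "mset (mult_xy lq (act n lq C vb k i j g (tau k i j z)))
      = mset (map (neg_swap_term k i j) (mult_xy lq (act n lq C vb k i j g z)))"
    unfolding mult_xy_eq_map
    by (simp add: mset_act_tau[OF os] image_mset.compositionality comp_def mult_term_swap_term)
  then have Dop_tau: "Dop lq ?p (mult_xy lq (act n lq C vb k i j g (tau k i j z)))
      = Dop lq ?p (map (neg_swap_term k i j) (mult_xy lq (act n lq C vb k i j g z)))"
    by (rule Dop_mset)
  have props: "generically_continuous f \<and> inF ?p f \<and> z' \<in> Bset n lq C vb k i j"
    if mem: "(f, z') \<in> set (mult_xy lq (act n lq C vb k i j g z))" for f z'
  proof -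
    obtain f0 where f0: "(f0, z') \<in> set (act n lq C vb k i j g z)"
      and f: "f = (\<lambda>w. qbr lq (fst w - snd w) * f0 w)"
    proof -
      obtain y where y: "y \<in> set (act n lq C vb k i j g z)" "(f, z') = mult_term lq y"
        using mem unfolding mult_xy_eq_map set_map image_iff by blast
      obtain f0 z0 where "y = (f0, z0)"
        by (cases y)
      with y show ?thesis
        by (intro that) (simp_all add: mult_term_def)
    qed
    have "generically_continuous f"
      unfolding f using act_term_props(1)[OF q f0]
      by (rule generically_continuous_mult) (intro continuous_intros)
    then show ?thesis
      using act_term_props(2)[OF q f0] inF mem unfolding all_inF_def by auto
  qed
  have "(\<lambda>s. Dop lq ?p (mult_xy lq (act n lq C vb k i j g z)) s
      - 1 * Dop lq ?p (map (neg_swap_term k i j) (mult_xy lq (act n lq C vb k i j g z))) s)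
      \<in> cspan (rel_gens (Bset n lq C vb k i j) (tau k i j))"
    by (rule Dop_map_in_cspan)
      (use props in \<open>simp_all add: neg_swap_term_def DF_uminus_swap[OF _ _ p] evF_uminus_swap[OF _ _ p]\<close>)
  then show ?thesis
    unfolding vc_eq_def Dop_tau by simp
qed

lemma vc_eq_act_tau:
  assumes q: "exp lq \<noteq> 1" "exp lq \<noteq> -1" and os: "one_singular n lq C vb k i j"
    and inF: "all_inF (vb k i, vb k j) (act n lq C vb k i j g z)"
  shows "vc_eq (Bset n lq C vb k i j) (tau k i j)
    (Dop lq (vb k i, vb k j) (act n lq C vb k i j g z))
    (\<lambda>s. - Dop lq (vb k i, vb k j) (act n lq C vb k i j g (tau k i j z)) s)"
proof -
  let ?p = "(vb k i, vb k j)"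
  have p: "prod.swap ?p = ?p"
    using os unfolding one_singular_def by simp
  have Dop_tau: "Dop lq ?p (act n lq C vb k i j g (tau k i j z))
      = Dop lq ?p (map (swap_term k i j) (act n lq C vb k i j g z))"
    by (rule Dop_mset) (simp add: mset_act_tau[OF os])
  have props: "generically_continuous f \<and> inF ?p f \<and> z' \<in> Bset n lq C vb k i j"
    if "(f, z') \<in> set (act n lq C vb k i j g z)" for f z'
    using act_term_props[OF q that] inF that unfolding all_inF_def by auto
  have "(\<lambda>s. Dop lq ?p (act n lq C vb k i j g z) s
      - (- 1) * Dop lq ?p (map (swap_term k i j) (act n lq C vb k i j g z)) s)
      \<in> cspan (rel_gens (Bset n lq C vb k i j) (tau k i j))"
    by (rule Dop_map_in_cspan)
      (use props in \<open>simp_all add: swap_term_def DF_swap[OF _ _ p] evF_swap[OF _ _ p]\<close>)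
  then show ?thesis
    unfolding vc_eq_def Dop_tau by simp
qed

theorem proposition4p3:
  fixes n k i j :: nat and lq :: complex and C :: "rel set" and vb :: tab and g :: gen
  assumes "n \<ge> 2" and "exp lq \<noteq> 1" and "exp lq \<noteq> -1"
    and "C \<subseteq> Rset n" and "admissible n C"
    and "one_singular n lq C vb k i j"
    and "gen_ok n g"
  shows
    "(\<forall>z\<in>Bset n lq C vb k i j.
        all_inF (vb k i, vb k j) (mult_xy lq (act n lq C vb k i j g z)) \<and>
        all_inF (vb k i, vb k j) (mult_xy lq (act n lq C vb k i j g (tau k i j z))) \<longrightarrow>
        vc_eq (Bset n lq C vb k i j) (tau k i j)
          (Dop lq (vb k i, vb k j) (mult_xy lq (act n lq C vb k i j g z)))
          (Dop lq (vb k i, vb k j) (mult_xy lq (act n lq C vb k i j g (tau k i j z)))))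
   \<and> (\<forall>z\<in>Bset n lq C vb k i j. tau k i j z \<noteq> z \<and>
        all_inF (vb k i, vb k j) (act n lq C vb k i j g z) \<and>
        all_inF (vb k i, vb k j) (act n lq C vb k i j g (tau k i j z)) \<longrightarrow>
        vc_eq (Bset n lq C vb k i j) (tau k i j)
          (Dop lq (vb k i, vb k j) (act n lq C vb k i j g z))
          (\<lambda>s. - Dop lq (vb k i, vb k j) (act n lq C vb k i j g (tau k i j z)) s))"
  using vc_eq_mult_xy_act_tau[OF assms(2,3,6)] vc_eq_act_tau[OF assms(2,3,6)] by blast

end
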